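(* Let $\mathcal H$ be a Hilbert space of finite dimension $d$, let $\{|i\rangle\}_{i=1}^d$ be a fixed orthonormal (incoherent) basis, and let $\mathcal L\colon\mathcal B(\mathcal H)\to\mathcal B(\mathcal H)$ be a time-independent generator of a quantum dynamics, i.e. a linear, trace-preserving and Hermiticity-preserving map, with associated propagators $\mathcal E_{t_2,t_1}=e^{(t_2-t_1)\mathcal L}$ for $t_2\ge t_1\ge 0$. Then the dynamics is NCGD if and only if $$\mathcal L_{\mathrm{pc}}\,\mathcal L_{\mathrm{cc}}^{\,j}\,\mathcal L_{\mathrm{cp}}=0\quad\text{for all } j\in\{0,1,\dots,d^2-d-1\}.$$
   Context: $\mathcal B(\mathcal H)$ is the space of (bounded) linear operators on $\mathcal H$. The complete dephasing map is $\Delta(X)=\sum_{i=1}^d |i\rangle\langle i|X|i\rangle\langle i|$. Set $\mathcal B_{\mathrm p}(\mathcal H)=\operatorname{Image}(\Delta)$ (diagonal operators, "populations") and $\mathcal B_{\mathrm c}(\mathcal H)=\operatorname{Kernel}(\Delta)$ (off-diagonal operators, "coherences"), so $\mathcal B(\mathcal H)=\mathcal B_{\mathrm p}(\mathcal H)\oplus\mathcal B_{\mathrm c}(\mathcal H)$ (orthogonal w.r.t. the Hilbert–Schmidt inner product). With $\Pi_{\mathrm p}=\Delta$ and $\Pi_{\mathrm c}=\mathrm{id}-\Delta$, the blocks of a linear map $\mathcal L$ are $\mathcal L_{xy}=\Pi_x\mathcal L\Pi_y$ restricted to a map $\mathcal B_y(\mathcal H)\to\mathcal B_x(\mathcal H)$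 for $x,y\in\{\mathrm p,\mathrm c\}$ (e.g. $\mathcal L_{\mathrm{pc}}\colon\mathcal B_{\mathrm c}(\mathcal H)\to\mathcal B_{\mathrm p}(\mathcal H)$), so that $\mathcal L=\begin{pmatrix}\mathcal L_{\mathrm{pp}}&\mathcal L_{\mathrm{pc}}\\ \mathcal L_{\mathrm{cp}}&\mathcal L_{\mathrm{cc}}\end{pmatrix}$; $\mathcal L_{\mathrm{cc}}^0$ is the identity on $\mathcal B_{\mathrm c}(\mathcal H)$. A dynamics with propagators $\mathcal E_{t_2,t_1}$ ($t_2\ge t_1\ge0$) is called non-coherence-generating-and-detecting (NCGD) iff $\Delta\circ\mathcal E_{t_3,t_2}\circ\Delta\circ\mathcal E_{t_2,t_1}\circ\Delta=\Delta\circ\mathcal E_{t_3,t_1}\circ\Delta$ for all $t_3\ge t_2\ge t_1\ge 0$. *)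

theory Defs
  imports "HOL-Analysis.Analysis"
begin

text \<open>Operators on H = C^d (d = CARD('n)) in the fixed incoherent basis are d x d complex
matrices; superoperators (maps B(H) -> B(H)) are HOL functions on such matrices.\<close>

type_synonym 'n op = "complex^('n::finite)^'n"
type_synonym 'n superop = "'n op \<Rightarrow> 'n op"

definition op_smult :: "complex \<Rightarrow> ('n::finite) op \<Rightarrow> 'n op" where
  "op_smult c X = (\<chi> i j. c * X$i$j)"

definition op_adjoint :: "('n::finite) op \<Rightarrow> 'n op" where
  "op_adjoint X = (\<chi> i j. cnj (X$j$i))"

definition op_trace :: "('n::finite) op \<Rightarrow> complex" where
  "op_trace X = (\<Sum>i\<in>UNIV. X$i$i)"

definition clinear_superop :: "('n::finite) superop \<Rightarrow> bool" where
  "clinear_superop L \<longleftrightarrow> (\<forall>X Y. L (X + Y) = L X + L Y) \<and> (\<forall>c X. L (op_smult c X) = op_smult c (L X))"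

definition trace_preserving :: "('n::finite) superop \<Rightarrow> bool" where
  "trace_preserving L \<longleftrightarrow> (\<forall>X. op_trace (L X) = op_trace X)"

definition hermiticity_preserving :: "('n::finite) superop \<Rightarrow> bool" where
  "hermiticity_preserving L \<longleftrightarrow> (\<forall>X. L (op_adjoint X) = op_adjoint (L X))"

definition dephase :: "('n::finite) superop" where
  "dephase X = (\<chi> i j. if i = j then X$i$j else 0)"

definition proj_p :: "('n::finite) superop" where "proj_p = dephase"
definition proj_c :: "('n::finite) superop" where "proj_c X = X - dephase X"

text \<open>Blocks L_xy = Pi_x o L o Pi_y (extended by zero outside B_y).\<close>
definition blk_pc :: "('n::finite) superop \<Rightarrow> 'n superop" where "blk_pc L = proj_p \<circ> L \<circ> proj_c"
definition blk_cc :: "('n::finite) superop \<Rightarrow> 'n superop" where "blk_cc L = proj_c \<circ> L \<circ> proj_c"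
definition blk_cp :: "('n::finite) superop \<Rightarrow> 'n superop" where "blk_cp L = proj_c \<circ> L \<circ> proj_p"

definition superop_exp :: "real \<Rightarrow> ('n::finite) superop \<Rightarrow> 'n superop" where
  "superop_exp t L X = (\<Sum>k. (t ^ k / fact k) *\<^sub>R (L ^^ k) X)"

definition propagator :: "('n::finite) superop \<Rightarrow> real \<Rightarrow> real \<Rightarrow> ('n::finite) superop" where
  "propagator L t2 t1 = superop_exp (t2 - t1) L"

definition NCGD :: "(real \<Rightarrow> real \<Rightarrow> ('n::finite) superop) \<Rightarrow> bool" where
  "NCGD E \<longleftrightarrow> (\<forall>t1 t2 t3. 0 \<le> t1 \<and> t1 \<le> t2 \<and> t2 \<le> t3 \<longrightarrow>
      dephase \<circ> E t3 t2 \<circ> dephase \<circ> E t2 t1 \<circ> dephase = dephase \<circ> E t3 t1 \<circ> dephase)"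

end

theory Submission
  imports Defs
begin

text \<open>Since \<open>e\<^bsup>sL\<^esup> e\<^bsup>uL\<^esup> = e\<^bsup>(s+u)L\<^esup>\<close>, the dynamics is NCGD iff
  \<open>\<Delta> e\<^bsup>sL\<^esup> \<Pi>\<^sub>c e\<^bsup>uL\<^esup> \<Delta> = 0\<close> for all \<open>s, u \<ge> 0\<close>. Comparing coefficients of the two
  exponential series, this means \<open>\<Delta> L\<^sup>a \<Pi>\<^sub>c L\<^sup>b \<Delta> = 0\<close> for all \<open>a, b\<close>, and expanding
  \<open>\<Pi>\<^sub>c L\<^sup>b \<Delta>\<close> along the block decomposition shows that this is equivalent to
  \<open>L\<^sub>p\<^sub>c L\<^sub>c\<^sub>c\<^sup>j L\<^sub>c\<^sub>p = 0\<close> for all \<open>j\<close>. Finally, the Krylov spaces spanned by the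
  \<open>L\<^sub>c\<^sub>c\<^sup>i L\<^sub>c\<^sub>p\<close> with \<open>i < j\<close> form an increasing chain inside the coherences, a complex space
  of dimension \<open>d\<^sup>2 - d\<close>, so the chain is stationary from \<open>j = d\<^sup>2 - d\<close> on and the
  conditions for \<open>j < d\<^sup>2 - d\<close> imply all others.\<close>

section \<open>Exponentials of bounded linear operators\<close>

definition linear_exp :: "real \<Rightarrow> ('a::real_normed_vector \<Rightarrow> 'a) \<Rightarrow> 'a \<Rightarrow> 'a" where
  "linear_exp t f x = (\<Sum>n. (t ^ n / fact n) *\<^sub>R (f ^^ n) x)"

lemma bounded_linear_funpow:
  fixes f :: "'a::real_normed_vector \<Rightarrow> 'a"
  assumes "bounded_linear f"
  shows "bounded_linear (f ^^ n)"
proof (induction n)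
  case 0
  show ?case
    using bounded_linear_ident by (simp add: id_def)
next
  case (Suc n)
  show ?case
    using bounded_linear_compose[OF assms Suc] by (simp add: o_def)
qed

lemma norm_funpow_le:
  fixes f :: "'a::real_normed_vector \<Rightarrow> 'a"
  assumes "bounded_linear f"
  obtains K where "K \<ge> 0" "\<And>n x. norm ((f ^^ n) x) \<le> K ^ n * norm x"
proof -
  obtain K where "K \<ge> 0" and K: "\<And>x. norm (f x) \<le> norm x * K"
    using bounded_linear.nonneg_bounded[OF assms] by blast
  have "norm ((f ^^ n) x) \<le> K ^ n * norm x" for n x
  proof (induction n)
    case (Suc n)
    have "norm ((f ^^ Suc n) x) \<le> norm ((f ^^ n) x) * K"
      using K[of "(f ^^ n) x"] by simp
    also have "\<dots> \<le> K ^ Suc n * norm x"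
      using mult_right_mono[OF Suc \<open>K \<ge> 0\<close>] by (simp add: algebra_simps)
    finally show ?case .
  qed simp
  with \<open>K \<ge> 0\<close> show ?thesis by (rule that)
qed

lemma summable_norm_exp_series:
  assumes "\<And>n. norm (v n) \<le> C * K ^ n"
  shows "summable (\<lambda>n. norm ((t ^ n / fact n) *\<^sub>R v n))"
proof (rule summable_comparison_test')
  show "summable (\<lambda>n. C * (inverse (fact n) * (\<bar>t\<bar> * K) ^ n))"
    by (intro summable_mult summable_exp)
  show "norm (norm ((t ^ n / fact n) *\<^sub>R v n)) \<le> C * (inverse (fact n) * (\<bar>t\<bar> * K) ^ n)" for n
    using mult_left_mono[OF assms[of n], of "\<bar>t\<bar> ^ n / fact n"]
    by (simp add: power_abs power_mult_distrib field_simps)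
qed

lemma summable_norm_linear_exp_terms:
  fixes f :: "'a::real_normed_vector \<Rightarrow> 'a" and g :: "'a \<Rightarrow> 'b::real_normed_vector"
  assumes "bounded_linear f" "bounded_linear g"
  shows "summable (\<lambda>n. norm ((t ^ n / fact n) *\<^sub>R g ((f ^^ n) x)))"
proof -
  obtain K where K: "\<And>n x. norm ((f ^^ n) x) \<le> K ^ n * norm x"
    using norm_funpow_le[OF assms(1)] by metis
  obtain C where "C \<ge> 0" and C: "\<And>y. norm (g y) \<le> norm y * C"
    using bounded_linear.nonneg_bounded[OF assms(2)] by blast
  have "norm (g ((f ^^ n) x)) \<le> (C * norm x) * K ^ n" for n
  proof -
    have "norm (g ((f ^^ n) x)) \<le> norm ((f ^^ n) x) * C"
      by (rule C)
    also have "\<dots> \<le> (K ^ n * norm x) * C"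
      by (rule mult_right_mono[OF K \<open>C \<ge> 0\<close>])
    finally show ?thesis
      by (simp only: mult_ac)
  qed
  then show ?thesis by (rule summable_norm_exp_series)
qed

lemma linear_exp_apply:
  fixes f :: "'a::banach \<Rightarrow> 'a"
  assumes "bounded_linear f" "bounded_linear g"
  shows "g (linear_exp t f x) = (\<Sum>n. (t ^ n / fact n) *\<^sub>R g ((f ^^ n) x))"
  using bounded_linear.suminf[OF assms(2) summable_norm_cancel
      [OF summable_norm_linear_exp_terms[OF assms(1) bounded_linear_ident]]]
  by (simp add: linear_exp_def linear_scale bounded_linear.linear[OF assms(2)])

lemma linear_exp_eq_blinfun_series:
  fixes f :: "'a::banach \<Rightarrow> 'a"
  assumes "bounded_linear f"
  shows "summable (\<lambda>n. norm ((t ^ n / fact n) *\<^sub>R Blinfun (f ^^ n)))"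
    and "linear_exp t f = blinfun_apply (\<Sum>n. (t ^ n / fact n) *\<^sub>R Blinfun (f ^^ n))"
proof -
  obtain K where "K \<ge> 0" and K: "\<And>n x. norm ((f ^^ n) x) \<le> K ^ n * norm x"
    using norm_funpow_le[OF assms] by metis
  have "norm (Blinfun (f ^^ n)) \<le> 1 * K ^ n" for n
    using K \<open>K \<ge> 0\<close>
    by (simp add: norm_blinfun_bound bounded_linear_Blinfun_apply[OF bounded_linear_funpow[OF assms]])
  then show sm: "summable (\<lambda>n. norm ((t ^ n / fact n) *\<^sub>R Blinfun (f ^^ n)))"
    by (rule summable_norm_exp_series)
  show "linear_exp t f = blinfun_apply (\<Sum>n. (t ^ n / fact n) *\<^sub>R Blinfun (f ^^ n))"
    using bounded_linear.suminf[OF blinfun.bounded_linear_left summable_norm_cancel[OF sm]]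
    by (simp add: fun_eq_iff linear_exp_def scaleR_blinfun.rep_eq
        bounded_linear_Blinfun_apply[OF bounded_linear_funpow[OF assms]])
qed

lemma bounded_linear_linear_exp:
  "bounded_linear (f :: 'a::banach \<Rightarrow> 'a) \<Longrightarrow> bounded_linear (linear_exp t f)"
  by (simp add: linear_exp_eq_blinfun_series(2) blinfun.bounded_linear_right)

text \<open>The partial sums over squares converge to the product. The part of a square outside
  its triangle is bounded by the same gap for the norms, which vanishes by the scalar Cauchy product.\<close>

lemma bounded_bilinear_Cauchy_product_sums:
  fixes a :: "nat \<Rightarrow> 'a::banach" and b :: "nat \<Rightarrow> 'b::banach"
  assumes pr: "bounded_bilinear pr"
    and a: "summable (\<lambda>k. norm (a k))" and b: "summable (\<lambda>k. norm (b k))"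
  shows "(\<lambda>k. \<Sum>i\<le>k. pr (a i) (b (k - i))) sums pr (\<Sum>k. a k) (\<Sum>k. b k)"
proof -
  obtain K where "K \<ge> 0" and K: "\<And>x y. norm (pr x y) \<le> norm x * norm y * K"
    using bounded_bilinear.nonneg_bounded[OF pr] by blast
  define square where "square n = {..<n} \<times> {..<n}" for n :: nat
  define triangle where "triangle n = {(i, j). i + j < n}" for n :: nat
  let ?g = "\<lambda>(i, j). pr (a i) (b j)"
  let ?f = "\<lambda>(i, j). norm (a i) * norm (b j)"
  have sq_eq: "sum ?g (square n) = pr (\<Sum>k<n. a k) (\<Sum>k<n. b k)" for n
  proof -
    have "sum ?g (square n) = (\<Sum>i<n. \<Sum>j<n. pr (a i) (b j))"
      by (simp add: square_def sum.cartesian_product)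
    also have "\<dots> = pr (\<Sum>k<n. a k) (\<Sum>k<n. b k)"
      by (simp add: bounded_bilinear.sum_left[OF pr] bounded_bilinear.sum_right[OF pr]) (rule sum.swap)
    finally show ?thesis .
  qed
  have g_square: "(\<lambda>n. sum ?g (square n)) \<longlonglongrightarrow> pr (\<Sum>k. a k) (\<Sum>k. b k)"
    unfolding sq_eq
    by (intro bounded_bilinear.tendsto[OF pr] summable_LIMSEQ
        summable_norm_cancel[OF a] summable_norm_cancel[OF b])
  have f_square: "(\<lambda>n. sum ?f (square n)) \<longlonglongrightarrow> (\<Sum>k. norm (a k)) * (\<Sum>k. norm (b k))"
    using tendsto_mult[OF summable_LIMSEQ[OF a] summable_LIMSEQ[OF b]]
    by (simp add: square_def sum_product sum.cartesian_product)
  have f_triangle: "(\<lambda>n. sum ?f (triangle n)) \<longlonglongrightarrow> (\<Sum>k. norm (a k)) * (\<Sum>k. norm (b k))"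
    using Cauchy_product_sums[of "\<lambda>k. norm (a k)" "\<lambda>k. norm (b k)"] a b
    by (simp add: sums_def triangle_def sum.triangle_reindex)
  have "(\<lambda>n. K * (sum ?f (square n) - sum ?f (triangle n))) \<longlonglongrightarrow> K * (0 :: real)"
    using tendsto_diff[OF f_square f_triangle] by (intro tendsto_mult tendsto_const) simp
  then have f_gap: "(\<lambda>n. K * (sum ?f (square n) - sum ?f (triangle n))) \<longlonglongrightarrow> 0"
    by simp
  have "norm (sum ?g (square n) - sum ?g (triangle n))
      \<le> K * (sum ?f (square n) - sum ?f (triangle n))" for n
  proof -
    have sub: "triangle n \<subseteq> square n" and fin: "finite (square n)"
      by (auto simp: triangle_def square_def)
    have "norm (sum ?g (square n) - sum ?g (triangle n))
        = norm (sum ?g (square n - triangle n))"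
      by (simp add: sum_diff[OF fin sub])
    also have "\<dots> \<le> (\<Sum>p\<in>square n - triangle n. K * ?f p)"
      using K by (intro sum_norm_le) (simp add: split_beta mult_ac)
    also have "\<dots> = K * (sum ?f (square n) - sum ?f (triangle n))"
      by (simp add: sum_distrib_left[symmetric] sum_diff[OF fin sub])
    finally show ?thesis .
  qed
  then have "(\<lambda>n. sum ?g (square n) - sum ?g (triangle n)) \<longlonglongrightarrow> 0"
    by (intro Lim_null_comparison[OF _ f_gap]) simp
  from tendsto_diff[OF g_square this] show ?thesis
    by (simp add: sums_def triangle_def sum.triangle_reindex)
qed

lemma linear_exp_add:
  fixes f :: "'a::banach \<Rightarrow> 'a"
  assumes f: "bounded_linear f"
  shows "linear_exp s f (linear_exp u f x) = linear_exp (s + u) f x"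
proof -
  define A where "A n = (s ^ n / fact n) *\<^sub>R Blinfun (f ^^ n)" for n
  define B where "B n = (u ^ n / fact n) *\<^sub>R (f ^^ n) x" for n
  have "(\<lambda>k. \<Sum>i\<le>k. blinfun_apply (A i) (B (k - i))) sums blinfun_apply (\<Sum>n. A n) (\<Sum>n. B n)"
    unfolding A_def B_def
    by (intro bounded_bilinear_Cauchy_product_sums bounded_bilinear_blinfun_apply
        linear_exp_eq_blinfun_series(1)[OF f]
        summable_norm_linear_exp_terms[OF f bounded_linear_ident])
  moreover have "blinfun_apply (\<Sum>n. A n) (\<Sum>n. B n) = linear_exp s f (linear_exp u f x)"
    by (simp only: A_def B_def linear_exp_eq_blinfun_series(2)[OF f, of s] linear_exp_def[of u])
  moreover have "(\<Sum>i\<le>k. blinfun_apply (A i) (B (k - i)))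
      = ((s + u) ^ k / fact k) *\<^sub>R (f ^^ k) x" for k
  proof -
    have "blinfun_apply (A i) (B (k - i))
        = (s ^ i / fact i * (u ^ (k - i) / fact (k - i))) *\<^sub>R (f ^^ k) x" if "i \<le> k" for i
    proof -
      have "(f ^^ i) ((f ^^ (k - i)) x) = (f ^^ (i + (k - i))) x"
        by (simp only: funpow_add o_apply)
      with that have "(f ^^ i) ((f ^^ (k - i)) x) = (f ^^ k) x"
        by simp
      then show ?thesis
        by (simp add: A_def B_def scaleR_blinfun.rep_eq linear_scale
            bounded_linear_Blinfun_apply[OF bounded_linear_funpow[OF f]]
            bounded_linear.linear[OF bounded_linear_funpow[OF f]])
    qed
    then have "(\<Sum>i\<le>k. blinfun_apply (A i) (B (k - i)))
        = (\<Sum>i\<le>k. s ^ i / fact i * (u ^ (k - i) / fact (k - i))) *\<^sub>R (f ^^ k) x"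
      by (simp add: scaleR_sum_left)
    also have "(\<Sum>i\<le>k. s ^ i / fact i * (u ^ (k - i) / fact (k - i))) = (s + u) ^ k / fact k"
      using exp_series_add_commuting[of s u k] by (simp add: divide_inverse mult.commute)
    finally show ?thesis .
  qed
  ultimately show ?thesis
    by (simp add: sums_iff linear_exp_def)
qed

section \<open>Power series vanishing for positive arguments\<close>

lemma powser_eq_0_on_pos_imp_coeff_eq_0:
  fixes c :: "nat \<Rightarrow> real"
  assumes summable: "\<And>t. summable (\<lambda>n. c n * t ^ n)"
    and zero: "\<And>t. t > 0 \<Longrightarrow> (\<Sum>n. c n * t ^ n) = 0"
  shows "c m = 0"
proof (induction m rule: less_induct)
  case (less m)
  define g where "g t = (\<Sum>n. c (n + m) * t ^ n)" for t
  have g_sums: "(\<lambda>n. c (n + m) * t ^ n) sums g t" for t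
    using summable[of t] by (simp add: g_def summable_sums summable_powser_ignore_initial_segment)
  have "g t = 0" if "t > 0" for t
  proof -
    have "0 = (\<Sum>n. c (n + m) * t ^ (n + m))"
      using suminf_split_initial_segment[OF summable[of t], of m] zero[OF that] less by simp
    also have "\<dots> = t ^ m * g t"
      using suminf_mult[OF sums_summable[OF g_sums[of t]], of "t ^ m"]
      by (simp add: g_def power_add mult_ac)
    finally show ?thesis
      using that by simp
  qed
  then have "(g \<longlongrightarrow> 0) (at_right 0)"
    by (intro tendsto_eventually eventually_mono[OF eventually_at_right_less]) simp
  moreover have "(g \<longlongrightarrow> c m) (at_right 0)"
    using powser_limit_0[of 1 "\<lambda>n. c (n + m)" g] g_sums filterlim_at_split by fastforce
  ultimately show "c m = 0"
    using tendsto_unique[OF trivial_limit_at_right_real] by blast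
qed

lemma exp_series_eq_0_on_pos_imp_coeff_eq_0:
  fixes v :: "nat \<Rightarrow> 'a::{real_inner,banach}"
  assumes summable: "\<And>t. summable (\<lambda>n. (t ^ n / fact n) *\<^sub>R v n)"
    and zero: "\<And>t. t > 0 \<Longrightarrow> (\<Sum>n. (t ^ n / fact n) *\<^sub>R v n) = 0"
  shows "v m = 0"
proof -
  define c where "c n = (v n \<bullet> v m) / fact n" for n
  have c_sums: "(\<lambda>n. c n * t ^ n) sums ((\<Sum>n. (t ^ n / fact n) *\<^sub>R v n) \<bullet> v m)" for t
    using bounded_linear.sums[OF bounded_linear_inner_left summable_sums[OF summable[of t]]]
    by (simp add: c_def mult_ac)
  have "c m = 0"
  proof (rule powser_eq_0_on_pos_imp_coeff_eq_0)
    show "summable (\<lambda>n. c n * t ^ n)" for t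
      using c_sums by (rule sums_summable)
    show "(\<Sum>n. c n * t ^ n) = 0" if "t > 0" for t
      using sums_unique[OF c_sums[of t]] zero[OF that] by simp
  qed
  then show ?thesis
    by (simp add: c_def)
qed

lemma linear_exp_sandwich_eq_0_iff:
  fixes f Q :: "'a::banach \<Rightarrow> 'a" and P :: "'a \<Rightarrow> 'b::{real_inner,banach}"
  assumes f: "bounded_linear f" and P: "bounded_linear P" and Q: "bounded_linear Q"
  shows "(\<forall>s\<ge>0. \<forall>u\<ge>0. P (linear_exp s f (Q (linear_exp u f x))) = 0) \<longleftrightarrow>
    (\<forall>i j. P ((f ^^ i) (Q ((f ^^ j) x))) = 0)"
proof -
  have PfQ: "bounded_linear (\<lambda>y. P ((f ^^ i) (Q y)))" for i
    using bounded_linear_compose[OF P bounded_linear_compose[OF bounded_linear_funpow[OF f] Q]] .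
  have summable: "summable (\<lambda>n. (t ^ n / fact n) *\<^sub>R g ((f ^^ n) y))"
    if "bounded_linear g" for g :: "'a \<Rightarrow> 'b" and t y
    by (rule summable_norm_cancel[OF summable_norm_linear_exp_terms[OF f that]])
  have outer: "P (linear_exp s f y) = (\<Sum>i. (s ^ i / fact i) *\<^sub>R P ((f ^^ i) y))" for s y
    by (rule linear_exp_apply[OF f P])
  have inner: "P ((f ^^ i) (Q (linear_exp u f x)))
      = (\<Sum>j. (u ^ j / fact j) *\<^sub>R P ((f ^^ i) (Q ((f ^^ j) x))))" for i u
    by (rule linear_exp_apply[OF f PfQ])
  show ?thesis
  proof
    assume vanish: "\<forall>s\<ge>0. \<forall>u\<ge>0. P (linear_exp s f (Q (linear_exp u f x))) = 0"
    have row: "P ((f ^^ i) (Q (linear_exp u f x))) = 0" if "u \<ge> 0" for i u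
      by (rule exp_series_eq_0_on_pos_imp_coeff_eq_0
          [where v = "\<lambda>i. P ((f ^^ i) (Q (linear_exp u f x)))"])
        (use summable[OF P] vanish that in \<open>auto simp flip: outer\<close>)
    show "\<forall>i j. P ((f ^^ i) (Q ((f ^^ j) x))) = 0"
    proof (intro allI)
      fix i j
      show "P ((f ^^ i) (Q ((f ^^ j) x))) = 0"
        by (rule exp_series_eq_0_on_pos_imp_coeff_eq_0
            [where v = "\<lambda>j. P ((f ^^ i) (Q ((f ^^ j) x)))"])
          (use summable[OF PfQ] row in \<open>auto simp flip: inner\<close>)
    qed
  qed (simp add: outer inner)
qed

section \<open>Dephasing and the NCGD condition\<close>

lemma clinear_superop_dephase: "clinear_superop dephase"
  by (simp add: clinear_superop_def dephase_def op_smult_def vec_eq_iff)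

lemma clinear_superop_proj_c: "clinear_superop proj_c"
  by (simp add: clinear_superop_def proj_c_def dephase_def op_smult_def vec_eq_iff algebra_simps)

lemma clinear_superop_comp:
  "clinear_superop f \<Longrightarrow> clinear_superop g \<Longrightarrow> clinear_superop (f \<circ> g)"
  by (simp add: clinear_superop_def)

lemma clinear_superop_blocks:
  assumes "clinear_superop L"
  shows "clinear_superop (blk_pc L)" "clinear_superop (blk_cc L)" "clinear_superop (blk_cp L)"
  using assms clinear_superop_dephase clinear_superop_proj_c
  by (auto simp: blk_pc_def blk_cc_def blk_cp_def proj_p_def intro!: clinear_superop_comp)

lemma linear_if_clinear_superop:
  assumes "clinear_superop L"
  shows "linear L"
proof (rule linearI)
  have scaleR: "r *\<^sub>R X = op_smult (complex_of_real r) X" for r and X :: "'a op"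
    by (simp add: op_smult_def vec_eq_iff) (simp add: scaleR_conv_of_real)
  show "L (X + Y) = L X + L Y" for X Y
    using assms by (simp add: clinear_superop_def)
  show "L (r *\<^sub>R X) = r *\<^sub>R L X" for r X
    using assms by (simp add: clinear_superop_def scaleR)
qed

lemma dephase_proj_c [simp]: "dephase (proj_c X) = 0"
  by (simp add: dephase_def proj_c_def vec_eq_iff)

lemma proj_c_dephase [simp]: "proj_c (dephase X) = 0"
  by (simp add: dephase_def proj_c_def vec_eq_iff)

lemma dephase_dephase [simp]: "dephase (dephase X) = dephase X"
  by (simp add: dephase_def vec_eq_iff)

lemma proj_c_proj_c [simp]: "proj_c (proj_c X) = proj_c X"
  by (simp add: dephase_def proj_c_def vec_eq_iff)

lemma proj_c_add: "proj_c (X + Y) = proj_c X + proj_c Y"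
  by (simp add: proj_c_def dephase_def vec_eq_iff)

lemma dephase_add_proj_c: "dephase X + proj_c X = X"
  by (simp add: proj_c_def)

lemma dephase_linear_exp_dephase:
  assumes "bounded_linear L"
  shows "dephase (linear_exp s L (dephase (linear_exp u L X)))
    = dephase (linear_exp (s + u) L X) - dephase (linear_exp s L (proj_c (linear_exp u L X)))"
proof -
  have lin: "linear (\<lambda>Y. dephase (linear_exp s L Y))"
    using linear_compose[OF bounded_linear.linear[OF bounded_linear_linear_exp[OF assms]]
        linear_if_clinear_superop[OF clinear_superop_dephase]]
    by (simp add: o_def)
  have "dephase (linear_exp (s + u) L X)
      = dephase (linear_exp s L (dephase (linear_exp u L X) + proj_c (linear_exp u L X)))"
    by (simp add: linear_exp_add[OF assms] dephase_add_proj_c)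
  also have "\<dots> = dephase (linear_exp s L (dephase (linear_exp u L X)))
      + dephase (linear_exp s L (proj_c (linear_exp u L X)))"
    by (rule linear_add[OF lin])
  finally show ?thesis
    by simp
qed

lemma NCGD_propagator_iff:
  assumes "bounded_linear L"
  shows "NCGD (propagator L) \<longleftrightarrow>
    (\<forall>s\<ge>0. \<forall>u\<ge>0. \<forall>X. dephase (linear_exp s L (proj_c (linear_exp u L (dephase X)))) = 0)"
proof -
  have propagator: "propagator L t2 t1 = linear_exp (t2 - t1) L" for t2 t1
    by (simp add: propagator_def superop_exp_def linear_exp_def fun_eq_iff)
  show ?thesis
  proof
    assume NCGD: "NCGD (propagator L)"
    have "dephase (linear_exp s L (dephase (linear_exp u L (dephase X))))
        = dephase (linear_exp (s + u) L (dephase X))" if "s \<ge> 0" "u \<ge> 0" for s u X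
    proof -
      have "0 \<le> (0::real) \<and> 0 \<le> u \<and> u \<le> s + u"
        using that by simp
      from fun_cong[OF NCGD[unfolded NCGD_def, rule_format, OF this], of X] show ?thesis
        by (simp add: propagator)
    qed
    then show "\<forall>s\<ge>0. \<forall>u\<ge>0. \<forall>X. dephase (linear_exp s L (proj_c (linear_exp u L (dephase X)))) = 0"
      by (simp add: dephase_linear_exp_dephase[OF assms])
  next
    assume "\<forall>s\<ge>0. \<forall>u\<ge>0. \<forall>X. dephase (linear_exp s L (proj_c (linear_exp u L (dephase X)))) = 0"
    then have "dephase (linear_exp (t3 - t2) L (dephase (linear_exp (t2 - t1) L (dephase X))))
        = dephase (linear_exp (t3 - t1) L (dephase X))" if "t1 \<le> t2" "t2 \<le> t3" for t1 t2 t3 X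
      using that dephase_linear_exp_dephase[OF assms, of "t3 - t2" "t2 - t1"] by simp
    then show "NCGD (propagator L)"
      by (simp add: NCGD_def propagator fun_eq_iff)
  qed
qed

section \<open>Populations reached through coherences\<close>

lemma linear_funpow: "linear (f :: 'a::real_vector \<Rightarrow> 'a) \<Longrightarrow> linear (f ^^ n)"
  by (induction n) (simp_all add: linear_id linear_compose)

lemma proj_c_blk_cc [simp]: "proj_c (blk_cc L Y) = blk_cc L Y"
  by (simp add: blk_cc_def)

lemma proj_c_blk_cp [simp]: "proj_c (blk_cp L Y) = blk_cp L Y"
  by (simp add: blk_cp_def)

lemma proj_c_blk_cc_funpow_blk_cp [simp]:
  "proj_c ((blk_cc L ^^ j) (blk_cp L X)) = (blk_cc L ^^ j) (blk_cp L X)"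
  by (cases j) simp_all

lemma dephase_blk_cc_funpow_blk_cp [simp]: "dephase ((blk_cc L ^^ j) (blk_cp L X)) = 0"
  by (metis dephase_proj_c proj_c_blk_cc_funpow_blk_cp)

text \<open>Every coherence produced from a population enters through \<open>blk_cp L\<close> at some step and
  then evolves by \<open>blk_cc L\<close>.\<close>

lemma proj_c_funpow_dephase:
  assumes "linear L"
  shows "proj_c ((L ^^ n) (dephase X))
    = (\<Sum>i<n. (blk_cc L ^^ i) (blk_cp L ((L ^^ (n - Suc i)) (dephase X))))"
proof -
  have lin_cc: "linear (blk_cc L)"
    using linear_if_clinear_superop[OF clinear_superop_proj_c] assms
    by (auto simp: blk_cc_def intro!: linear_compose)
  show ?thesis
  proof (induction n)
    case (Suc n)
    let ?W = "(L ^^ n) (dephase X)"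
      have "proj_c ((L ^^ Suc n) (dephase X)) = proj_c (L (dephase ?W) + L (proj_c ?W))"
      using linear_add[OF assms] dephase_add_proj_c[of ?W] by (metis funpow.simps(2) o_apply)
    also have "\<dots> = blk_cp L ?W + blk_cc L (proj_c ?W)"
      by (simp add: proj_c_add blk_cp_def blk_cc_def proj_p_def)
    also have "blk_cc L (proj_c ?W)
        = (\<Sum>i<n. (blk_cc L ^^ Suc i) (blk_cp L ((L ^^ (n - Suc i)) (dephase X))))"
      by (simp add: Suc.IH linear_sum[OF lin_cc])
    finally show ?case
      by (simp del: sum.lessThan_Suc add: sum.lessThan_Suc_shift)
  qed simp
qed

lemma funpow_blk_cc_funpow_blk_cp:
  assumes "\<And>i Y. blk_pc L ((blk_cc L ^^ i) (blk_cp L Y)) = 0"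
  shows "(L ^^ a) ((blk_cc L ^^ j) (blk_cp L X)) = (blk_cc L ^^ (a + j)) (blk_cp L X)"
proof (induction a arbitrary: j)
  case (Suc a)
  let ?Y = "(blk_cc L ^^ j) (blk_cp L X)"
  have "L ?Y = dephase (L (proj_c ?Y)) + proj_c (L (proj_c ?Y))"
    by (simp add: dephase_add_proj_c)
  also have "\<dots> = (blk_cc L ^^ Suc j) (blk_cp L X)"
    using assms[of j X] by (simp add: blk_pc_def blk_cc_def proj_p_def)
  finally have "(L ^^ Suc a) ?Y = (L ^^ a) ((blk_cc L ^^ Suc j) (blk_cp L X))"
    by (simp only: funpow_Suc_right o_apply)
  then show ?case
    using Suc.IH[of "Suc j"] by (simp only: add_Suc_right add_Suc)
qed simp

lemma dephase_funpow_proj_c_eq_0_iff: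
  assumes "linear L"
  shows "(\<forall>a b X. dephase ((L ^^ a) (proj_c ((L ^^ b) (dephase X)))) = 0) \<longleftrightarrow>
    (\<forall>j X. blk_pc L ((blk_cc L ^^ j) (blk_cp L X)) = 0)"
proof
  have lin: "linear (\<lambda>Y. dephase (L Y))"
    using linear_compose[OF assms linear_if_clinear_superop[OF clinear_superop_dephase]]
    by (simp add: o_def)
  assume paths: "\<forall>a b X. dephase ((L ^^ a) (proj_c ((L ^^ b) (dephase X)))) = 0"
  show "\<forall>j X. blk_pc L ((blk_cc L ^^ j) (blk_cp L X)) = 0"
  proof (intro allI)
    fix j X
    show "blk_pc L ((blk_cc L ^^ j) (blk_cp L X)) = 0"
    proof (induction j arbitrary: X rule: less_induct)
      case (less j)
      \<comment> \<open>With \<open>a = 1\<close> and \<open>b = j + 1\<close>, all terms but the last vanish by induction.\<close>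
      let ?t = "\<lambda>i. blk_pc L ((blk_cc L ^^ i) (blk_cp L ((L ^^ (j - i)) (dephase X))))"
      have expand: "proj_c ((L ^^ Suc j) (dephase X))
          = (\<Sum>i<Suc j. (blk_cc L ^^ i) (blk_cp L ((L ^^ (j - i)) (dephase X))))"
        by (simp only: proj_c_funpow_dephase[OF assms] diff_Suc_Suc)
      have "0 = dephase (L (proj_c ((L ^^ Suc j) (dephase X))))"
        using paths[rule_format, of 1 "Suc j" X] by simp
      also have "\<dots> = (\<Sum>i<Suc j. ?t i)"
        unfolding expand linear_sum[OF lin] by (simp add: blk_pc_def proj_p_def)
      also have "\<dots> = ?t j"
        using less.IH by simp
      finally show ?case
        by (simp add: blk_cp_def proj_p_def)
    qed
  qed
next
  assume "\<forall>j X. blk_pc L ((blk_cc L ^^ j) (blk_cp L X)) = 0"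
  then have undetected:
    "(L ^^ a) ((blk_cc L ^^ i) (blk_cp L Y)) = (blk_cc L ^^ (a + i)) (blk_cp L Y)" for a i Y
    by (intro funpow_blk_cc_funpow_blk_cp) blast
  have lin: "linear (\<lambda>Y. dephase ((L ^^ a) Y))" for a
    using linear_compose[OF linear_funpow[OF assms]
        linear_if_clinear_superop[OF clinear_superop_dephase]]
    by (simp add: o_def)
  show "\<forall>a b X. dephase ((L ^^ a) (proj_c ((L ^^ b) (dephase X)))) = 0"
    by (simp add: proj_c_funpow_dephase[OF assms] linear_sum[OF lin] undetected)
qed

section \<open>Krylov spaces\<close>

definition krylov_span ::
    "('a::comm_ring_1 \<Rightarrow> 'b::ab_group_add \<Rightarrow> 'b) \<Rightarrow> ('b \<Rightarrow> 'b) \<Rightarrow> 'b set \<Rightarrow> nat \<Rightarrow> 'b set"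
  where "krylov_span s K W j = module.span s (\<Union>i<j. (K ^^ i) ` W)"

context vector_space
begin

lemma krylov_span_mono: "i \<le> j \<Longrightarrow> krylov_span scale K W i \<subseteq> krylov_span scale K W j"
  unfolding krylov_span_def by (intro span_mono UN_mono) auto

lemma funpow_in_krylov_span: "i < j \<Longrightarrow> v \<in> W \<Longrightarrow> (K ^^ i) v \<in> krylov_span scale K W j"
  unfolding krylov_span_def by (intro span_base) auto

lemma image_krylov_span_subset:
  assumes "Vector_Spaces.linear scale scale K"
  shows "K ` krylov_span scale K W j \<subseteq> krylov_span scale K W (Suc j)"
proof -
  interpret K: Vector_Spaces.linear scale scale K by (rule assms)
  have "K ` (\<Union>i<j. (K ^^ i) ` W) = (\<Union>i<j. (K ^^ Suc i) ` W)"
    by (simp add: image_UN image_comp)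
  also have "\<dots> \<subseteq> (\<Union>i<Suc j. (K ^^ i) ` W)"
    by (intro UN_least) (auto simp del: funpow.simps)
  finally show ?thesis
    unfolding krylov_span_def K.span_image[symmetric] by (rule span_mono)
qed

lemma subspace_krylov_span: "subspace (krylov_span scale K W j)"
  unfolding krylov_span_def by (rule subspace_span)

lemma krylov_span_Suc_Suc:
  assumes K: "Vector_Spaces.linear scale scale K"
    and eq: "krylov_span scale K W (Suc j) = krylov_span scale K W j"
  shows "krylov_span scale K W (Suc (Suc j)) = krylov_span scale K W (Suc j)"
proof (rule antisym)
  have "(K ^^ i) v \<in> krylov_span scale K W (Suc j)" if "i < Suc (Suc j)" "v \<in> W" for i v
  proof (cases "i = Suc j")
    case True
    have "(K ^^ j) v \<in> krylov_span scale K W j"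
      using eq funpow_in_krylov_span[of j "Suc j" v W K] \<open>v \<in> W\<close> by simp
    then show ?thesis
      using image_krylov_span_subset[OF K, of W j] True by auto
  next
    case False
    then show ?thesis
      using that funpow_in_krylov_span[of i "Suc j" v W K] by simp
  qed
  then show "krylov_span scale K W (Suc (Suc j)) \<subseteq> krylov_span scale K W (Suc j)"
    unfolding krylov_span_def[of scale K W "Suc (Suc j)"] using subspace_krylov_span
    by (intro span_minimal) auto
qed (rule krylov_span_mono, simp)

lemma krylov_span_stationary:
  assumes K: "Vector_Spaces.linear scale scale K"
    and j0: "krylov_span scale K W (Suc j0) = krylov_span scale K W j0" and "j0 \<le> j"
  shows "krylov_span scale K W j = krylov_span scale K W j0"
proof -
  have "krylov_span scale K W (Suc j) = krylov_span scale K W j \<and> krylov_span scale K W j = krylov_span scale K W j0"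
    using \<open>j0 \<le> j\<close>
  proof (induction j rule: nat_induct_at_least)
    case (Suc j)
    then show ?case
      using krylov_span_Suc_Suc[OF K, of W j] by simp
  qed (use j0 in simp)
  then show ?thesis
    by simp
qed

end

context finite_dimensional_vector_space
begin

lemma le_dim_krylov_span:
  assumes "\<And>i. i < j \<Longrightarrow> krylov_span scale K W (Suc i) \<noteq> krylov_span scale K W i"
  shows "j \<le> dim (krylov_span scale K W j)"
  using assms
proof (induction j)
  case (Suc j)
  have "krylov_span scale K W j \<subset> krylov_span scale K W (Suc j)"
    using krylov_span_mono[of j "Suc j" K W] Suc.prems by auto
  then have "dim (krylov_span scale K W j) < dim (krylov_span scale K W (Suc j))"
    using dim_psubset by (simp add: krylov_span_def span_span)
  with Suc show ?case
    by simp
qed simp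

text \<open>The Krylov spans increase, become stationary as soon as two consecutive ones agree, and can
  increase strictly at most \<open>n\<close> times.\<close>

lemma funpow_in_span_first_iterates:
  assumes K: "Vector_Spaces.linear scale scale K"
    and dim: "dim (\<Union>i. (K ^^ i) ` W) \<le> n"
    and w: "w \<in> W"
  shows "(K ^^ j) w \<in> span (\<Union>i<n. (K ^^ i) ` W)"
proof -
  have dim_krylov: "dim (krylov_span scale K W m) \<le> n" for m
  proof -
    have "krylov_span scale K W m \<subseteq> span (\<Union>i. (K ^^ i) ` W)"
      unfolding krylov_span_def by (intro span_mono) auto
    then show ?thesis
      using dim_mono dim by (meson order_trans)
  qed
  have "\<exists>j0\<le>n. krylov_span scale K W (Suc j0) = krylov_span scale K W j0"
  proof (rule ccontr)
    assume "\<not> ?thesis"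
    then have "Suc n \<le> dim (krylov_span scale K W (Suc n))"
      by (intro le_dim_krylov_span) (auto simp: less_Suc_eq_le)
    with dim_krylov[of "Suc n"] show False
      by simp
  qed
  then obtain j0 where "j0 \<le> n" and j0: "krylov_span scale K W (Suc j0) = krylov_span scale K W j0"
    by blast
  have "(K ^^ j) w \<in> krylov_span scale K W (j0 + Suc j)"
    using funpow_in_krylov_span w by simp
  also have "\<dots> = krylov_span scale K W j0"
    by (rule krylov_span_stationary[OF K j0]) simp
  also have "\<dots> \<subseteq> krylov_span scale K W n"
    by (rule krylov_span_mono[OF \<open>j0 \<le> n\<close>])
  finally show ?thesis
    by (simp add: krylov_span_def)
qed

end

section \<open>Operators as a complex vector space\<close>

text \<open>Complex scalars matter: the coherences have complex dimension \<open>d\<^sup>2 - d\<close>, which is the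
  bound in the theorem, but real dimension \<open>2(d\<^sup>2 - d)\<close>.\<close>

interpretation op_vs: vector_space "op_smult :: complex \<Rightarrow> 'n::finite op \<Rightarrow> 'n op"
  by unfold_locales (simp_all add: op_smult_def vec_eq_iff algebra_simps)

definition matrix_unit :: "'n::finite \<Rightarrow> 'n \<Rightarrow> 'n op" where
  "matrix_unit i j = (\<chi> k l. if k = i \<and> l = j then 1 else 0)"

lemma matrix_unit_eq_iff: "matrix_unit i j = matrix_unit k l \<longleftrightarrow> i = k \<and> j = l"
proof
  assume "matrix_unit i j = matrix_unit k l"
  then have "matrix_unit i j $ i $ j = matrix_unit k l $ i $ j"
    by simp
  then show "i = k \<and> j = l"
    by (simp add: matrix_unit_def split: if_splits)
qed simp

lemma sum_matrix_units:
  fixes X :: "'n::finite op"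
  assumes "\<And>i j. (i, j) \<notin> D \<Longrightarrow> X $ i $ j = 0"
  shows "X = (\<Sum>(i, j)\<in>D. op_smult (X $ i $ j) (matrix_unit i j))"
proof -
  have "(\<Sum>(i, j)\<in>D. X $ i $ j * matrix_unit i j $ k $ l) = X $ k $ l" for k l
  proof -
    have "(\<Sum>(i, j)\<in>D. X $ i $ j * matrix_unit i j $ k $ l)
        = (\<Sum>p\<in>D. if p = (k, l) then X $ k $ l else 0)"
      by (rule sum.cong) (auto simp: matrix_unit_def split: if_splits)
    then show ?thesis
      using assms[of k l] by simp
  qed
  then show ?thesis
    by (simp add: vec_eq_iff sum_component op_smult_def case_prod_beta)
qed

lemma in_span_matrix_units:
  fixes X :: "'n::finite op"
  assumes "\<And>i j. (i, j) \<notin> D \<Longrightarrow> X $ i $ j = 0"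
  shows "X \<in> op_vs.span (case_prod matrix_unit ` D)"
proof -
  have "(\<Sum>(i, j)\<in>D. op_smult (X $ i $ j) (matrix_unit i j))
      \<in> op_vs.span (case_prod matrix_unit ` D)"
    by (intro op_vs.span_sum) (auto intro: op_vs.span_scale[OF op_vs.span_base])
  with sum_matrix_units[of D X, OF assms] show ?thesis
    by simp
qed

lemma span_matrix_units: "op_vs.span (range (case_prod matrix_unit)) = (UNIV :: 'n::finite op set)"
  using in_span_matrix_units[of UNIV] by auto

lemma independent_matrix_units:
  "op_vs.independent (range (case_prod matrix_unit) :: 'n::finite op set)"
proof (rule op_vs.independent_if_scalars_zero)
  show "finite (range (case_prod matrix_unit) :: 'n op set)"
    by simp
  fix c :: "'n op \<Rightarrow> complex" and E :: "'n op"
  assume sum: "(\<Sum>E\<in>range (case_prod matrix_unit). op_smult (c E) E) = 0"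
    and "E \<in> range (case_prod matrix_unit)"
  then obtain k l where E: "E = matrix_unit k l"
    by auto
  have inj: "inj (case_prod matrix_unit :: 'n \<times> 'n \<Rightarrow> 'n op)"
    by (auto simp: inj_def matrix_unit_eq_iff)
  have "0 = (\<Sum>p\<in>UNIV. op_smult (c (case_prod matrix_unit p)) (case_prod matrix_unit p))
      $ k $ l"
    using sum by (simp only: sum.reindex[OF inj] o_def) simp
  also have "\<dots> = (\<Sum>(i, j)\<in>UNIV. c (matrix_unit i j) * matrix_unit i j $ k $ l)"
    by (simp add: sum_component op_smult_def split_beta)
  also have "\<dots> = (\<Sum>p\<in>UNIV. if p = (k, l) then c (matrix_unit k l) else 0)"
    by (rule sum.cong) (auto simp: matrix_unit_def split: if_splits)
  finally show "c E = 0"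
    using E by simp
qed

interpretation op_vs:
  finite_dimensional_vector_space "op_smult :: complex \<Rightarrow> 'n::finite op \<Rightarrow> 'n op"
    "range (case_prod matrix_unit)"
  by unfold_locales (simp_all add: independent_matrix_units span_matrix_units)

lemma card_off_diagonal: "card {(i, j). i \<noteq> (j :: 'n::finite)} = CARD('n) ^ 2 - CARD('n)"
proof -
  have "{(i, j). i \<noteq> (j :: 'n)} = UNIV - range (\<lambda>i. (i, i))"
    by auto
  moreover have "card (range (\<lambda>i :: 'n. (i, i))) = CARD('n)"
    by (rule card_image) (auto simp: inj_on_def)
  ultimately show ?thesis
    by (simp add: card_Diff_subset power2_eq_square)
qed

lemma dim_coherences_le:
  "op_vs.dim {X :: 'n::finite op. dephase X = 0} \<le> CARD('n) ^ 2 - CARD('n)"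
proof -
  have "{X :: 'n op. dephase X = 0} \<subseteq> op_vs.span (case_prod matrix_unit ` {(i, j). i \<noteq> j})"
    by (auto intro!: in_span_matrix_units simp: dephase_def vec_eq_iff)
  then have "op_vs.dim {X :: 'n op. dephase X = 0}
      \<le> card (case_prod matrix_unit ` {(i, j). i \<noteq> (j :: 'n)})"
    by (rule op_vs.dim_le_card) simp
  also have "\<dots> \<le> card {(i, j). i \<noteq> (j :: 'n)}"
    by (rule card_image_le) simp
  finally show ?thesis
    by (simp add: card_off_diagonal)
qed

lemma clinear_superop_iff_linear:
  "clinear_superop L \<longleftrightarrow> Vector_Spaces.linear op_smult op_smult L"
  by (simp add: Vector_Spaces.linear_iff clinear_superop_def op_vs.vector_space_axioms)

lemma blk_pc_cc_cp_eq_0_iff_first_terms: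
  fixes L :: "'n::finite superop"
  assumes "clinear_superop L"
  shows "(\<forall>j X. blk_pc L ((blk_cc L ^^ j) (blk_cp L X)) = 0) \<longleftrightarrow>
    (\<forall>j \<in> {0..<CARD('n)^2 - CARD('n)}. blk_pc L \<circ> (blk_cc L ^^ j) \<circ> blk_cp L = (\<lambda>X. 0))"
proof
  let ?N = "CARD('n)^2 - CARD('n)"
  interpret P: Vector_Spaces.linear op_smult op_smult "blk_pc L"
    using clinear_superop_blocks(1)[OF assms] by (simp add: clinear_superop_iff_linear)
  have K: "Vector_Spaces.linear op_smult op_smult (blk_cc L)"
    using clinear_superop_blocks(2)[OF assms] by (simp add: clinear_superop_iff_linear)
  assume short: "\<forall>j \<in> {0..<?N}. blk_pc L \<circ> (blk_cc L ^^ j) \<circ> blk_cp L = (\<lambda>X. 0)"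
  have "(\<Union>i. (blk_cc L ^^ i) ` range (blk_cp L)) \<subseteq> {X. dephase X = 0}"
    by auto
  then have dim: "op_vs.dim (\<Union>i. (blk_cc L ^^ i) ` range (blk_cp L)) \<le> ?N"
    using op_vs.dim_subset dim_coherences_le order_trans by blast
  have "op_vs.span (\<Union>i<?N. (blk_cc L ^^ i) ` range (blk_cp L)) \<subseteq> {Y. blk_pc L Y = 0}"
    using short by (intro op_vs.span_minimal P.subspace_kernel) (auto simp: fun_eq_iff)
  with op_vs.funpow_in_span_first_iterates[OF K dim]
  show "\<forall>j X. blk_pc L ((blk_cc L ^^ j) (blk_cp L X)) = 0"
    by blast
qed (simp add: fun_eq_iff)

theorem theorem1:
  fixes L :: "'n::finite superop"
  assumes "clinear_superop L"
    and "trace_preserving L"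
    and "hermiticity_preserving L"
  shows "NCGD (propagator L) \<longleftrightarrow>
    (\<forall>j \<in> {0..<CARD('n)^2 - CARD('n)}. blk_pc L \<circ> (blk_cc L ^^ j) \<circ> blk_cp L = (\<lambda>X. 0))"
proof -
  have lin: "linear L"
    using assms(1) by (rule linear_if_clinear_superop)
  have bounded: "bounded_linear L" "bounded_linear (dephase :: 'n superop)"
    "bounded_linear (proj_c :: 'n superop)"
    using lin linear_if_clinear_superop[OF clinear_superop_dephase]
      linear_if_clinear_superop[OF clinear_superop_proj_c]
    by (simp_all add: linear_conv_bounded_linear)
  have "NCGD (propagator L) \<longleftrightarrow>
      (\<forall>s\<ge>0. \<forall>u\<ge>0. \<forall>X. dephase (linear_exp s L (proj_c (linear_exp u L (dephase X)))) = 0)"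
    by (rule NCGD_propagator_iff[OF bounded(1)])
  also have "\<dots> \<longleftrightarrow> (\<forall>a b X. dephase ((L ^^ a) (proj_c ((L ^^ b) (dephase X)))) = 0)"
    using linear_exp_sandwich_eq_0_iff[OF bounded] by blast
  also have "\<dots> \<longleftrightarrow> (\<forall>j X. blk_pc L ((blk_cc L ^^ j) (blk_cp L X)) = 0)"
    by (rule dephase_funpow_proj_c_eq_0_iff[OF lin])
  also have "\<dots> \<longleftrightarrow>
      (\<forall>j \<in> {0..<CARD('n)^2 - CARD('n)}. blk_pc L \<circ> (blk_cc L ^^ j) \<circ> blk_cp L = (\<lambda>X. 0))"
    by (rule blk_pc_cc_cp_eq_0_iff_first_terms[OF assms(1)])
  finally show ?thesis .
qed

end
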